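(* Fix $n\ge1$ and let $\kappa_n=1+4\pi^2n^2D$. If $\kappa_n\neq3/2$, then a pitchfork bifurcation occurs at $(\kappa_n,\kappa_n)$, and its type is determined by the sign of $\alpha_n''(0)$: it is subcritical if $\alpha_n''(0)<0$, i.e. $\kappa_n<3/2$ (equivalently $0<D<(8n^2\pi^2)^{-1}$), and supercritical if $\alpha_n''(0)>0$, i.e. $\kappa_n>3/2$ (equivalently $D>(8n^2\pi^2)^{-1}$).
   Context: $\mathbb{T}=[0,1]$ with endpoints identified; $D>0$; stationary problem $0=DU_{xx}-U+\kappa e^U/\int_0^1e^Udy$, periodic, with trivial branch $U\equiv\kappa$. Near $(\kappa_n,\kappa_n)$ the nonconstant solutions form a smooth branch $\Gamma_n(s)=(\kappa_n+\alpha_n(s)+s\sqrt2\cos(2n\pi x)+sz_n(s),\ \kappa_n+\alpha_n(s))$, $|s|<\delta$, with $\alpha_n$ smooth, $\alpha_n(0)=\alpha_n'(0)=0$ and $z_n(0)=0$. The bifurcation is a pitchfork if $\alpha_n''(0)\ne0$; it is subcritical if $\kappa_n+\alpha_n(s)<\kappa_n$ for small $s\neq0$ (branch on the side where the trivial solution is stable) and supercritical if $\kappa_n+\alpha_n(s)>\kappa_n$ for small $s\ne0$. *)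

theory Defs
  imports "HOL-Analysis.Analysis"
begin

fun iter_pd :: "('a::real_normed_vector) list \<Rightarrow> ('a \<Rightarrow> real) \<Rightarrow> 'a \<Rightarrow> real" where
  "iter_pd [] f = f"
| "iter_pd (v # vs) f = (\<lambda>x. deriv (\<lambda>t. iter_pd vs f (x + t *\<^sub>R v)) 0)"

definition smooth_on :: "('a::euclidean_space) set \<Rightarrow> ('a \<Rightarrow> real) \<Rightarrow> bool" where
  "smooth_on S f \<longleftrightarrow>
     (\<forall>vs. set vs \<subseteq> Basis \<longrightarrow>
        continuous_on S (iter_pd vs f) \<and>
        (\<forall>x\<in>S. \<forall>v\<in>Basis. (\<lambda>t. iter_pd vs f (x + t *\<^sub>R v)) differentiable (at 0)))"

definition kappa :: "real \<Rightarrow> nat \<Rightarrow> real" where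
  "kappa D n = 1 + 4 * pi\<^sup>2 * (real n)\<^sup>2 * D"

definition stationary_solution :: "real \<Rightarrow> real \<Rightarrow> (real \<Rightarrow> real) \<Rightarrow> bool" where
  "stationary_solution D k U \<longleftrightarrow>
     (\<forall>x. U (x + 1) = U x) \<and>
     (\<forall>x. D * deriv (deriv U) x - U x + k * exp (U x) / integral {0..1} (\<lambda>y. exp (U y)) = 0)"

definition branch_U :: "real \<Rightarrow> nat \<Rightarrow> (real \<Rightarrow> real) \<Rightarrow> (real \<Rightarrow> real \<Rightarrow> real) \<Rightarrow> real \<Rightarrow> real \<Rightarrow> real" where
  "branch_U D n \<alpha> z s x = kappa D n + \<alpha> s + s * sqrt 2 * cos (2 * real n * pi * x) + s * z s x"

definition subcritical :: "real \<Rightarrow> nat \<Rightarrow> (real \<Rightarrow> real) \<Rightarrow> bool" where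
  "subcritical D n \<alpha> \<longleftrightarrow> (\<exists>\<epsilon>>0. \<forall>s. 0 < \<bar>s\<bar> \<and> \<bar>s\<bar> < \<epsilon> \<longrightarrow> kappa D n + \<alpha> s < kappa D n)"

definition supercritical :: "real \<Rightarrow> nat \<Rightarrow> (real \<Rightarrow> real) \<Rightarrow> bool" where
  "supercritical D n \<alpha> \<longleftrightarrow> (\<exists>\<epsilon>>0. \<forall>s. 0 < \<bar>s\<bar> \<and> \<bar>s\<bar> < \<epsilon> \<longrightarrow> kappa D n + \<alpha> s > kappa D n)"

end

theory Submission
  imports Defs
begin

(*
  Write the branch as U = lam s + s * Z s with Z s = phi + z s, phi = sqrt 2 * cos (2 n pi x) and
  lam = kappa_n + alpha. Integrating the stationary equation against the Laplace eigenfunctions 1,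
  phi and psi = cos (4 n pi x) moves U'' onto the test function and gives, with M s = int exp (s * Z s),
  the exact balances
    int Z s = 0,
    kappa_n * s * int phi * Z s = lam s / M s * int phi * exp (s * Z s),
    kappa_2n * s * int psi * Z s = lam s / M s * int psi * exp (s * Z s).
  Since z s = O(s) uniformly, expanding exp (s * Z s) to third order and passing to the limit under the
  integrals, the psi-balance gives J s / s --> kappa_n / (4 * (kappa_2n - kappa_n)) for J s = int psi * z s,
  and then the phi-balance gives alpha s / s^2 --> kappa_n * (1/4 - kappa_n / (12 * (kappa_n - 1))).
  Hence alpha''(0) = kappa_n * (2 * kappa_n - 3) / (6 * (kappa_n - 1)), whose sign is that of kappa_n - 3/2.
*)

lemma real_differentiable_shift0:
  fixes g :: "real \<Rightarrow> real"
  assumes "(\<lambda>t. g (x + t)) differentiable (at 0)"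
  shows "g differentiable (at x)"
proof -
  obtain d where "((\<lambda>t. g (t + x)) has_real_derivative d) (at 0)"
    using assms by (auto simp: real_differentiable_def add.commute)
  then have "(g has_real_derivative d) (at x)"
    using DERIV_shift[of g d 0 x] by simp
  then show ?thesis by (auto simp: real_differentiable_def)
qed

lemma deriv_periodic:
  assumes "\<forall>x. g (x + p) = g x"
  shows "deriv g (x + p) = deriv g x"
proof -
  have "(\<lambda>y. g (y + p)) = g" using assms by auto
  then have "(g has_field_derivative d) (at (x + p)) \<longleftrightarrow> (g has_field_derivative d) (at x)" for d
    using DERIV_shift[of g d x p] by simp
  then show ?thesis by (simp add: deriv_def)
qed

lemma has_integral_cos_multiple:
  assumes "m \<ge> 1"
  shows "((\<lambda>x. cos (2 * real m * pi * x)) has_integral 0) {0..1}"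
proof -
  define \<omega> where "\<omega> = 2 * real m * pi"
  have "\<omega> \<noteq> 0" using assms by (simp add: \<omega>_def)
  have "((\<lambda>x. cos (\<omega> * x)) has_integral (sin (\<omega> * 1) / \<omega> - sin (\<omega> * 0) / \<omega>)) {0..1}"
  proof (rule fundamental_theorem_of_calculus)
    show "((\<lambda>x. sin (\<omega> * x) / \<omega>) has_vector_derivative cos (\<omega> * x)) (at x within {0..1})" for x
      unfolding has_real_derivative_iff_has_vector_derivative[symmetric]
      using \<open>\<omega> \<noteq> 0\<close> by (auto intro!: derivative_eq_intros)
  qed simp
  moreover have "sin (\<omega> * 1) = 0"
    using sin_npi[of "2 * m"] by (simp add: \<omega>_def mult.commute)
  ultimately show ?thesis by (simp add: \<omega>_def)
qed

lemma has_integral_cos_powers: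
  fixes m :: nat
  assumes "m \<ge> 1"
  defines "c \<equiv> \<lambda>x. cos (2 * real m * pi * x)"
  shows "((\<lambda>x. c x ^ 2) has_integral 1/2) {0..1}"
    and "((\<lambda>x. c x ^ 3) has_integral 0) {0..1}"
    and "((\<lambda>x. c x ^ 4) has_integral 3/8) {0..1}"
proof -
  have one: "((\<lambda>x. 1) has_integral (1::real)) {0..1::real}"
    using has_integral_const_real[of "1::real" 0 1] by simp
  have cos_k: "((\<lambda>x. cos (2 * real (k * m) * pi * x)) has_integral 0) {0..1}" if "k \<ge> 1" for k
    using has_integral_cos_multiple[of "k * m"] that assms by simp
  have c1: "(c has_integral 0) {0..1}"
    using cos_k[of 1] by (simp add: c_def)
  have c2: "cos (2 * real (2 * m) * pi * x) = 2 * c x ^ 2 - 1" for x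
    using cos_double_cos[of "2 * real m * pi * x"] by (simp add: c_def mult_ac)
  have c3: "cos (2 * real (3 * m) * pi * x) = 4 * c x ^ 3 - 3 * c x" for x
    using cos_treble_cos[of "2 * real m * pi * x"] by (simp add: c_def mult_ac)
  have c4: "cos (2 * real (4 * m) * pi * x) = 2 * (2 * c x ^ 2 - 1) ^ 2 - 1" for x
    using cos_double_cos[of "2 * real (2 * m) * pi * x"] c2[of x] by (simp add: mult_ac)
  have "((\<lambda>x. (cos (2 * real (2 * m) * pi * x) + 1) / 2) has_integral (0 + 1) / 2) {0..1}"
    by (intro has_integral_divide has_integral_add cos_k one) simp
  then show sq: "((\<lambda>x. c x ^ 2) has_integral 1/2) {0..1}"
    unfolding c2 by simp
  have "((\<lambda>x. (cos (2 * real (3 * m) * pi * x) + 3 * c x) / 4) has_integral (0 + 3 * 0) / 4) {0..1}"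
    by (intro has_integral_divide has_integral_add has_integral_mult_right cos_k c1) simp
  then show "((\<lambda>x. c x ^ 3) has_integral 0) {0..1}"
    unfolding c3 by simp
  have "((\<lambda>x. (cos (2 * real (4 * m) * pi * x) + 8 * c x ^ 2 - 1) / 8) has_integral (0 + 8 * (1/2) - 1) / 8) {0..1}"
    by (intro has_integral_divide has_integral_diff has_integral_add has_integral_mult_right cos_k sq one) simp
  then show "((\<lambda>x. c x ^ 4) has_integral 3/8) {0..1}"
    unfolding c4 by (simp add: power2_eq_square algebra_simps eval_nat_numeral)
qed

lemma green_identity_periodic:
  fixes u u1 u2 g g1 g2 :: "real \<Rightarrow> real"
  assumes "a \<le> b"
    and u: "\<And>x. (u has_real_derivative u1 x) (at x)" "\<And>x. (u1 has_real_derivative u2 x) (at x)"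
    and g: "\<And>x. (g has_real_derivative g1 x) (at x)" "\<And>x. (g1 has_real_derivative g2 x) (at x)"
    and periodic: "u b = u a" "u1 b = u1 a" "g b = g a" "g1 b = g1 a"
  shows "((\<lambda>x. g x * u2 x - g2 x * u x) has_integral 0) {a..b}"
proof -
  define G where "G x = g x * u1 x - g1 x * u x" for x
  have "((\<lambda>x. g x * u2 x - g2 x * u x) has_integral (G b - G a)) {a..b}"
  proof (rule fundamental_theorem_of_calculus[OF \<open>a \<le> b\<close>])
    fix x
    have "(G has_real_derivative g1 x * u1 x + g x * u2 x - (g2 x * u x + g1 x * u1 x)) (at x)"
      unfolding G_def by (auto intro!: derivative_eq_intros u g)
    then show "(G has_vector_derivative g x * u2 x - g2 x * u x) (at x within {a..b})"
      by (auto simp: has_real_derivative_iff_has_vector_derivative[symmetric] algebra_simps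
          intro: has_field_derivative_at_within)
  qed
  moreover have "G b = G a" by (simp add: G_def periodic)
  ultimately show ?thesis by simp
qed

lemma stationary_solution_cos_moment:
  fixes m :: nat
  assumes sol: "stationary_solution D k U"
    and U_diff: "\<And>x. U differentiable (at x)" and U'_diff: "\<And>x. deriv U differentiable (at x)"
  defines "c \<equiv> \<lambda>x. cos (2 * real m * pi * x)"
  shows "(1 + (2 * real m * pi)\<^sup>2 * D) * integral {0..1} (\<lambda>x. c x * U x)
       = k / integral {0..1} (\<lambda>y. exp (U y)) * integral {0..1} (\<lambda>x. c x * exp (U x))"
proof -
  define \<omega> where "\<omega> = 2 * real m * pi"
  define I where "I = integral {0..1} (\<lambda>y. exp (U y))"
  have periodic: "\<forall>x. U (x + 1) = U x"
    and equation: "\<And>x. D * deriv (deriv U) x = U x - k * exp (U x) / I"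
    using sol by (auto simp: stationary_solution_def I_def algebra_simps)
  have "((\<lambda>x. c x * deriv (deriv U) x - (- \<omega>\<^sup>2 * c x) * U x) has_integral 0) {0..1}"
  proof (rule green_identity_periodic)
    show "(U has_real_derivative deriv U x) (at x)" "(deriv U has_real_derivative deriv (deriv U) x) (at x)" for x
      using U_diff U'_diff by (simp_all add: DERIV_deriv_iff_real_differentiable)
    show "(c has_real_derivative - \<omega> * sin (\<omega> * x)) (at x)"
      "((\<lambda>x. - \<omega> * sin (\<omega> * x)) has_real_derivative - \<omega>\<^sup>2 * c x) (at x)" for x
      unfolding c_def \<omega>_def by (auto intro!: derivative_eq_intros simp: power2_eq_square)
    show "U 1 = U 0" "deriv U 1 = deriv U 0"
      using periodic[rule_format, of 0] deriv_periodic[OF periodic, of 0] by simp_all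
    show "c 1 = c 0" "- \<omega> * sin (\<omega> * 1) = - \<omega> * sin (\<omega> * 0)"
      using sin_npi[of "2 * m"] cos_2npi[of m] by (simp_all add: c_def \<omega>_def mult_ac)
  qed simp
  then have "((\<lambda>x. D * (c x * deriv (deriv U) x - (- \<omega>\<^sup>2 * c x) * U x)) has_integral D * 0) {0..1}"
    by (rule has_integral_mult_right)
  moreover have "D * (c x * deriv (deriv U) x - (- \<omega>\<^sup>2 * c x) * U x)
      = (1 + \<omega>\<^sup>2 * D) * (c x * U x) - k / I * (c x * exp (U x))" for x
    using arg_cong[OF equation[of x], of "\<lambda>t. c x * t"] by (simp add: algebra_simps)
  ultimately have "((\<lambda>x. (1 + \<omega>\<^sup>2 * D) * (c x * U x) - k / I * (c x * exp (U x))) has_integral 0) {0..1}"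
    by simp
  moreover have "continuous_on {0..1} U"
    using U_diff by (meson continuous_at_imp_continuous_on differentiable_imp_continuous_within)
  then have "((\<lambda>x. (1 + \<omega>\<^sup>2 * D) * (c x * U x) - k / I * (c x * exp (U x))) has_integral
      (1 + \<omega>\<^sup>2 * D) * integral {0..1} (\<lambda>x. c x * U x) - k / I * integral {0..1} (\<lambda>x. c x * exp (U x))) {0..1}"
    unfolding c_def
    by (intro has_integral_diff has_integral_mult_right integrable_integral
        integrable_continuous_interval continuous_intros)
  ultimately show ?thesis
    unfolding \<omega>_def I_def by (metis (no_types, lifting) eq_iff_diff_eq_0 has_integral_unique)
qed

(* Junk at s = 0, where it divides by 0 ^ k; only values with s \<noteq> 0 are ever used. *)
definition exp_taylor_quot :: "nat \<Rightarrow> real \<Rightarrow> real \<Rightarrow> real" where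
  "exp_taylor_quot k s w = (exp (s * w) - (\<Sum>m<k. (s * w) ^ m / fact m)) / s ^ k"

lemma exp_taylor_remainder_bound:
  fixes y :: real
  shows "\<bar>exp y - (\<Sum>m<k. y ^ m / fact m)\<bar> \<le> exp \<bar>y\<bar> * \<bar>y\<bar> ^ k / fact k"
proof -
  obtain t where t: "\<bar>t\<bar> \<le> \<bar>y\<bar>" "exp y = (\<Sum>m<k. y ^ m / fact m) + exp t / fact k * y ^ k"
    using Maclaurin_exp_le by blast
  have "\<bar>exp y - (\<Sum>m<k. y ^ m / fact m)\<bar> = exp t * \<bar>y\<bar> ^ k / fact k"
    by (simp add: t(2) abs_mult power_abs)
  also have "\<dots> \<le> exp \<bar>y\<bar> * \<bar>y\<bar> ^ k / fact k"
    using t(1) by (intro divide_right_mono mult_right_mono) auto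
  finally show ?thesis .
qed

lemma exp_taylor_expansion:
  assumes "s \<noteq> 0"
  shows "exp (s * w) = (\<Sum>m<k. (s * w) ^ m / fact m) + s ^ k * exp_taylor_quot k s w"
  using assms by (simp add: exp_taylor_quot_def)

lemma exp_taylor_quot_Suc:
  assumes "s \<noteq> 0"
  shows "exp_taylor_quot k s w = w ^ k / fact k + s * exp_taylor_quot (Suc k) s w"
  using assms by (simp add: exp_taylor_quot_def field_simps power_mult_distrib)

lemma exp_taylor_quot_bound:
  assumes "s \<noteq> 0" "\<bar>s\<bar> \<le> r" "\<bar>w\<bar> \<le> B"
  shows "\<bar>exp_taylor_quot k s w\<bar> \<le> exp (r * B) * B ^ k / fact k"
proof -
  have "\<bar>exp_taylor_quot k s w\<bar> * \<bar>s\<bar> ^ k \<le> exp \<bar>s * w\<bar> * \<bar>s * w\<bar> ^ k / fact k"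
    using exp_taylor_remainder_bound[of "s * w" k] assms(1)
    by (simp add: exp_taylor_quot_def abs_divide power_abs)
  also have "\<dots> = (exp \<bar>s * w\<bar> * \<bar>w\<bar> ^ k / fact k) * \<bar>s\<bar> ^ k"
    by (simp add: abs_mult power_mult_distrib)
  finally have "\<bar>exp_taylor_quot k s w\<bar> \<le> exp \<bar>s * w\<bar> * \<bar>w\<bar> ^ k / fact k"
    by (rule mult_right_le_imp_le) (use assms(1) in simp)
  also have "\<dots> \<le> exp (r * B) * B ^ k / fact k"
    using assms(2,3) by (intro divide_right_mono mult_mono power_mono)
      (auto simp: abs_mult intro: mult_mono)
  finally show ?thesis .
qed

lemma tendsto_exp_taylor_quot:
  assumes lim: "(w \<longlongrightarrow> w0) (at 0)" and bound: "\<forall>\<^sub>F s in at 0. \<bar>w s\<bar> \<le> B"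
  shows "((\<lambda>s. exp_taylor_quot k s (w s)) \<longlongrightarrow> w0 ^ k / fact k) (at 0)"
proof -
  define C where "C = exp B * B ^ Suc k / fact (Suc k)"
  have small: "\<forall>\<^sub>F s in at (0::real). s \<noteq> 0 \<and> \<bar>s\<bar> \<le> 1"
    by (auto simp: eventually_at intro: exI[of _ 1])
  have "((\<lambda>s. exp_taylor_quot k s (w s) - w s ^ k / fact k) \<longlongrightarrow> 0) (at 0)"
  proof (rule Lim_null_comparison)
    show "\<forall>\<^sub>F s in at 0. norm (exp_taylor_quot k s (w s) - w s ^ k / fact k) \<le> C * \<bar>s\<bar>"
      using small bound
    proof eventually_elim
      case (elim s)
      then have "\<bar>exp_taylor_quot (Suc k) s (w s)\<bar> \<le> C"
        using exp_taylor_quot_bound[of s 1 "w s" B "Suc k"] by (simp add: C_def)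
      then show ?case
        using elim exp_taylor_quot_Suc[of s k "w s"] by (simp add: abs_mult mult.commute mult_left_mono)
    qed
    show "((\<lambda>s. C * \<bar>s\<bar>) \<longlongrightarrow> 0) (at 0)"
      by (auto intro!: tendsto_eq_intros)
  qed
  moreover have "((\<lambda>s. w s ^ k / fact k) \<longlongrightarrow> w0 ^ k / fact k) (at 0)"
    by (intro tendsto_intros lim) simp
  ultimately show ?thesis
    by (rule Lim_transform[rotated])
qed

lemma continuous_on_exp_taylor_quot:
  assumes "continuous_on S w" "s \<noteq> 0"
  shows "continuous_on S (\<lambda>x. exp_taylor_quot k s (w x))"
  unfolding exp_taylor_quot_def using assms by (intro continuous_intros) auto

lemma integral_exp_taylor:
  fixes g w :: "real \<Rightarrow> real"
  assumes g: "continuous_on {a..b} g" and w: "continuous_on {a..b} w" and "s \<noteq> 0"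
  shows "integral {a..b} (\<lambda>x. g x * exp (s * w x))
       = (\<Sum>m<k. s ^ m / fact m * integral {a..b} (\<lambda>x. g x * w x ^ m))
         + s ^ k * integral {a..b} (\<lambda>x. g x * exp_taylor_quot k s (w x))"
proof -
  have expand: "g x * exp (s * w x)
      = (\<Sum>m<k. s ^ m / fact m * (g x * w x ^ m)) + s ^ k * (g x * exp_taylor_quot k s (w x))" for x
    by (subst exp_taylor_expansion[OF \<open>s \<noteq> 0\<close>, of "w x" k])
      (simp add: sum_distrib_left power_mult_distrib algebra_simps)
  have int: "(\<lambda>x. g x * w x ^ m) integrable_on {a..b}" for m
    by (intro integrable_continuous_interval continuous_intros g w)
  have "(\<lambda>x. g x * exp_taylor_quot k s (w x)) integrable_on {a..b}"
    by (intro integrable_continuous_interval continuous_intros continuous_on_exp_taylor_quot g w \<open>s \<noteq> 0\<close>)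
  then have "((\<lambda>x. (\<Sum>m<k. s ^ m / fact m * (g x * w x ^ m)) + s ^ k * (g x * exp_taylor_quot k s (w x)))
      has_integral (\<Sum>m<k. s ^ m / fact m * integral {a..b} (\<lambda>x. g x * w x ^ m))
         + s ^ k * integral {a..b} (\<lambda>x. g x * exp_taylor_quot k s (w x))) {a..b}"
    by (intro has_integral_add has_integral_sum has_integral_mult_right integrable_integral int) auto
  then show ?thesis
    unfolding expand by (rule integral_unique)
qed

lemma integral_tendsto_dominated_at:
  fixes f :: "'a::first_countable_topology \<Rightarrow> 'n::euclidean_space \<Rightarrow> 'm::euclidean_space"
  assumes bound: "\<forall>\<^sub>F t in at t0. f t integrable_on S \<and> (\<forall>x\<in>S. norm (f t x) \<le> h x)"
    and h: "h integrable_on S"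
    and lim: "\<And>x. x \<in> S \<Longrightarrow> ((\<lambda>t. f t x) \<longlongrightarrow> g x) (at t0)"
  shows "((\<lambda>t. integral S (f t)) \<longlongrightarrow> integral S g) (at t0)"
proof (subst tendsto_at_iff_sequentially, intro allI impI)
  fix X :: "nat \<Rightarrow> 'a"
  assume "\<forall>i. X i \<in> UNIV - {t0}" and "X \<longlonglongrightarrow> t0"
  then have X: "filterlim X (at t0) sequentially"
    by (auto simp: filterlim_at)
  obtain N where N: "\<And>k. k \<ge> N \<Longrightarrow> f (X k) integrable_on S \<and> (\<forall>x\<in>S. norm (f (X k) x) \<le> h x)"
    using filterlim_iff[THEN iffD1, OF X, rule_format, OF bound] by (auto simp: eventually_sequentially)
  have "(\<lambda>k. integral S (f (X (k + N)))) \<longlonglongrightarrow> integral S g"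
  proof (rule dominated_convergence(2)[OF _ h])
    show "f (X (k + N)) integrable_on S" "x \<in> S \<Longrightarrow> norm (f (X (k + N)) x) \<le> h x" for k x
      using N[of "k + N"] by auto
    show "(\<lambda>k. f (X (k + N)) x) \<longlonglongrightarrow> g x" if "x \<in> S" for x
      using filterlim_compose[OF lim[OF that] X] by (rule LIMSEQ_ignore_initial_segment)
  qed
  then show "((\<lambda>t. integral S (f t)) \<circ> X) \<longlonglongrightarrow> integral S g"
    unfolding comp_def by (rule LIMSEQ_offset)
qed

lemma has_integral_continuous:
  fixes f :: "real \<Rightarrow> real"
  assumes "continuous_on {a..b} f"
  shows "(f has_integral integral {a..b} f) {a..b}"
  using integrable_continuous_real[OF assms] by (rule integrable_integral)

lemma integral_pos_continuous:
  fixes h :: "real \<Rightarrow> real"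
  assumes "a < b" "continuous_on {a..b} h" "\<And>x. x \<in> {a..b} \<Longrightarrow> h x > 0"
  shows "integral {a..b} h > 0"
proof -
  obtain x0 where x0: "x0 \<in> {a..b}" "\<And>y. y \<in> {a..b} \<Longrightarrow> h x0 \<le> h y"
    using continuous_attains_inf[OF compact_Icc _ assms(2)] assms(1) by fastforce
  have "integral {a..b} (\<lambda>_. h x0) \<le> integral {a..b} h"
    by (rule integral_le) (auto intro: integrable_continuous_interval assms(2) x0(2))
  moreover have "integral {a..b} (\<lambda>_. h x0) = h x0 * (b - a)"
    using assms(1) by simp
  ultimately show ?thesis
    using assms(1) assms(3)[OF x0(1)] by (smt (verit) mult_pos_pos)
qed

lemma integral_tendsto_0_uniform:
  fixes f :: "'a \<Rightarrow> real \<Rightarrow> real"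
  assumes "a \<le> b"
    and "\<forall>\<^sub>F t in F. continuous_on {a..b} (f t) \<and> (\<forall>x\<in>{a..b}. \<bar>f t x\<bar> \<le> e t)"
    and "(e \<longlongrightarrow> 0) F"
  shows "((\<lambda>t. integral {a..b} (f t)) \<longlongrightarrow> 0) F"
proof (rule Lim_null_comparison)
  show "\<forall>\<^sub>F t in F. norm (integral {a..b} (f t)) \<le> e t * (b - a)"
    using assms(2)
  proof eventually_elim
    case (elim t)
    then show ?case using integral_bound[OF \<open>a \<le> b\<close>, of "f t" "e t"] by auto
  qed
  show "((\<lambda>t. e t * (b - a)) \<longlongrightarrow> 0) F"
    using tendsto_mult[OF assms(3) tendsto_const] by simp
qed

lemma tendsto_div_square_second_deriv:
  fixes f :: "real \<Rightarrow> real"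
  assumes "f 0 = 0" "deriv f 0 = 0"
    and "\<forall>\<^sub>F s in nhds 0. (f has_real_derivative deriv f s) (at s)"
    and "(deriv f has_real_derivative f2) (at 0)"
  shows "((\<lambda>s. f s / s\<^sup>2) \<longlongrightarrow> f2 / 2) (at 0)"
proof (rule lhopital[where f' = "deriv f" and g' = "\<lambda>s. 2 * s"])
  have "isCont f 0"
    using assms(3) by (auto dest: eventually_nhds_x_imp_x DERIV_isCont)
  then show "(f \<longlongrightarrow> 0) (at 0)"
    using assms(1) by (simp add: isCont_def)
  show "((\<lambda>s. s\<^sup>2) \<longlongrightarrow> 0) (at (0::real))"
    by (auto intro!: tendsto_eq_intros)
  show "\<forall>\<^sub>F s in at 0. s\<^sup>2 \<noteq> (0::real)" "\<forall>\<^sub>F s in at 0. 2 * s \<noteq> (0::real)"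
    by (auto simp: eventually_at_filter)
  show "\<forall>\<^sub>F s in at 0. (f has_real_derivative deriv f s) (at s)"
    using assms(3) by (simp add: eventually_at_filter eventually_mono)
  show "\<forall>\<^sub>F s in at 0. ((\<lambda>s. s\<^sup>2) has_real_derivative 2 * s) (at s)"
    by (auto intro!: always_eventually derivative_eq_intros)
  have "((\<lambda>s. deriv f s / s) \<longlongrightarrow> f2) (at 0)"
    using assms(2,4) by (simp add: DERIV_def)
  then have "((\<lambda>s. deriv f s / s / 2) \<longlongrightarrow> f2 / 2) (at 0)"
    by (rule tendsto_divide[OF _ tendsto_const]) simp
  then show "((\<lambda>s. deriv f s / (2 * s)) \<longlongrightarrow> f2 / 2) (at 0)"
    by (simp add: field_simps)
qed

lemma sign_near_0_from_div_square:
  fixes f :: "real \<Rightarrow> real"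
  assumes "((\<lambda>s. f s / s\<^sup>2) \<longlongrightarrow> L) (at 0)"
  shows "L < 0 \<Longrightarrow> \<exists>\<epsilon>>0. \<forall>s. 0 < \<bar>s\<bar> \<and> \<bar>s\<bar> < \<epsilon> \<longrightarrow> f s < 0"
    and "L > 0 \<Longrightarrow> \<exists>\<epsilon>>0. \<forall>s. 0 < \<bar>s\<bar> \<and> \<bar>s\<bar> < \<epsilon> \<longrightarrow> f s > 0"
proof -
  assume "L < 0"
  then have "\<forall>\<^sub>F s in at 0. f s / s\<^sup>2 < 0"
    using order_tendstoD(2)[OF assms] by simp
  then show "\<exists>\<epsilon>>0. \<forall>s. 0 < \<bar>s\<bar> \<and> \<bar>s\<bar> < \<epsilon> \<longrightarrow> f s < 0"
    by (auto simp: eventually_at divide_less_0_iff)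
next
  assume "L > 0"
  then have "\<forall>\<^sub>F s in at 0. f s / s\<^sup>2 > 0"
    using order_tendstoD(1)[OF assms] by simp
  then show "\<exists>\<epsilon>>0. \<forall>s. 0 < \<bar>s\<bar> \<and> \<bar>s\<bar> < \<epsilon> \<longrightarrow> f s > 0"
    by (auto simp: eventually_at zero_less_divide_iff)
qed

lemma linear_bound_vanishing_at_0:
  fixes f f' :: "real \<Rightarrow> 'a::topological_space \<Rightarrow> real"
  assumes "compact K"
    and vanish: "\<And>x. x \<in> K \<Longrightarrow> f 0 x = 0"
    and deriv: "\<And>\<sigma> x. \<sigma> \<in> {-r..r} \<Longrightarrow> x \<in> K \<Longrightarrow> ((\<lambda>\<sigma>. f \<sigma> x) has_real_derivative f' \<sigma> x) (at \<sigma>)"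
    and cont: "continuous_on ({-r..r} \<times> K) (\<lambda>(\<sigma>, x). f' \<sigma> x)"
  shows "\<exists>C. \<forall>s\<in>{-r..r}. \<forall>x\<in>K. \<bar>f s x\<bar> \<le> C * \<bar>s\<bar>"
proof -
  have "compact ((\<lambda>(\<sigma>, x). f' \<sigma> x) ` ({-r..r} \<times> K))"
    by (intro compact_continuous_image cont compact_Times compact_Icc \<open>compact K\<close>)
  then obtain C where C: "\<And>\<sigma> x. \<sigma> \<in> {-r..r} \<Longrightarrow> x \<in> K \<Longrightarrow> \<bar>f' \<sigma> x\<bar> \<le> C"
    by (fastforce dest!: compact_imp_bounded simp: bounded_iff)
  have "\<bar>f s x\<bar> \<le> C * \<bar>s\<bar>" if "s \<in> {-r..r}" "x \<in> K" for s x
  proof -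
    have "norm (f s x - f 0 x) \<le> C * norm (s - 0)"
    proof (rule field_differentiable_bound[of "{-r..r}" "\<lambda>\<sigma>. f \<sigma> x" "\<lambda>\<sigma>. f' \<sigma> x"])
      show "((\<lambda>\<sigma>. f \<sigma> x) has_field_derivative f' \<sigma> x) (at \<sigma> within {-r..r})" if "\<sigma> \<in> {-r..r}" for \<sigma>
        using deriv[OF that \<open>x \<in> K\<close>] by (rule has_field_derivative_at_within)
      show "norm (f' \<sigma> x) \<le> C" if "\<sigma> \<in> {-r..r}" for \<sigma>
        using C[OF that \<open>x \<in> K\<close>] by simp
    qed (use that in auto)
    then show ?thesis
      using vanish[OF \<open>x \<in> K\<close>] by simp
  qed
  then show ?thesis by blast
qed

lemma smooth_on_partials:
  assumes "smooth_on S f" "set vs \<subseteq> Basis"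
  shows "continuous_on S (iter_pd vs f)"
    and "x \<in> S \<Longrightarrow> v \<in> Basis \<Longrightarrow> (\<lambda>t. iter_pd vs f (x + t *\<^sub>R v)) differentiable (at 0)"
  using assms unfolding smooth_on_def by blast+

lemma smooth_on_real_differentiable:
  fixes f :: "real \<Rightarrow> real"
  assumes "smooth_on S f" "x \<in> S"
  shows "f differentiable (at x)" and "deriv f differentiable (at x)"
proof -
  have "(\<lambda>t. iter_pd [] f (x + t *\<^sub>R 1)) differentiable (at 0)"
    by (rule smooth_on_partials(2)[OF assms(1) _ assms(2)]) (simp_all add: Basis_real_def)
  then show "f differentiable (at x)"
    by - (rule real_differentiable_shift0, simp)
  have "iter_pd [1] f y = deriv f y" for y
    using deriv_shift_0[of f y] by (simp add: o_def)
  moreover have "(\<lambda>t. iter_pd [1] f (x + t *\<^sub>R 1)) differentiable (at 0)"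
    by (rule smooth_on_partials(2)[OF assms(1) _ assms(2)]) (simp_all add: Basis_real_def)
  ultimately show "deriv f differentiable (at x)"
    by - (rule real_differentiable_shift0, simp)
qed

lemma smooth_on_prod_differentiable_snd:
  fixes F :: "real \<times> real \<Rightarrow> real"
  assumes "smooth_on S F" "(s, x) \<in> S"
  shows "(\<lambda>y. F (s, y)) differentiable (at x)" and "deriv (\<lambda>y. F (s, y)) differentiable (at x)"
proof -
  have basis: "(0, 1) \<in> (Basis :: (real \<times> real) set)"
    by (simp add: Basis_prod_def)
  have "(\<lambda>t. iter_pd [] F ((s, x) + t *\<^sub>R (0, 1))) differentiable (at 0)"
    by (rule smooth_on_partials(2)[OF assms(1) _ assms(2) basis]) auto
  then show "(\<lambda>y. F (s, y)) differentiable (at x)"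
    by - (rule real_differentiable_shift0, simp)
  have "iter_pd [(0, 1)] F (s, y) = deriv (\<lambda>y. F (s, y)) y" for y
    using deriv_shift_0[of "\<lambda>y. F (s, y)" y] by (simp add: o_def)
  moreover have "(\<lambda>t. iter_pd [(0, 1)] F ((s, x) + t *\<^sub>R (0, 1))) differentiable (at 0)"
    by (rule smooth_on_partials(2)[OF assms(1) _ assms(2) basis]) (use basis in auto)
  ultimately show "deriv (\<lambda>y. F (s, y)) differentiable (at x)"
    by - (rule real_differentiable_shift0, simp)
qed

lemma smooth_on_prod_deriv_fst:
  fixes F :: "real \<times> real \<Rightarrow> real"
  assumes "smooth_on S F" "(s, x) \<in> S"
  shows "((\<lambda>\<sigma>. F (\<sigma>, x)) has_real_derivative iter_pd [(1, 0)] F (s, x)) (at s)"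
proof -
  have "(\<lambda>t. iter_pd [] F ((s, x) + t *\<^sub>R (1, 0))) differentiable (at 0)"
    by (rule smooth_on_partials(2)[OF assms(1) _ assms(2)]) (auto simp: Basis_prod_def)
  then have "(\<lambda>\<sigma>. F (\<sigma>, x)) differentiable (at s)"
    by - (rule real_differentiable_shift0, simp)
  moreover have "iter_pd [(1, 0)] F (s, x) = deriv (\<lambda>\<sigma>. F (\<sigma>, x)) s"
    using deriv_shift_0[of "\<lambda>\<sigma>. F (\<sigma>, x)" s] by (simp add: o_def)
  ultimately show ?thesis
    by (simp add: DERIV_deriv_iff_real_differentiable)
qed

lemma kappa_eq: "kappa D m = 1 + (2 * real m * pi)\<^sup>2 * D"
  by (simp add: kappa_def power_mult_distrib)

lemma kappa_double_gap: "kappa D (2 * n) - kappa D n = 3 * (kappa D n - 1)"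
  by (simp add: kappa_def)

lemma kappa_vs_three_halves:
  assumes "n \<ge> 1"
  shows "kappa D n < 3 / 2 \<longleftrightarrow> D < 1 / (8 * (real n)\<^sup>2 * pi\<^sup>2)"
    and "kappa D n > 3 / 2 \<longleftrightarrow> D > 1 / (8 * (real n)\<^sup>2 * pi\<^sup>2)"
proof -
  have pos: "8 * (real n)\<^sup>2 * pi\<^sup>2 > 0"
    using assms by simp
  show "kappa D n < 3 / 2 \<longleftrightarrow> D < 1 / (8 * (real n)\<^sup>2 * pi\<^sup>2)"
    using pos by (simp add: kappa_def less_divide_eq algebra_simps)
  show "kappa D n > 3 / 2 \<longleftrightarrow> D > 1 / (8 * (real n)\<^sup>2 * pi\<^sup>2)"
    using pos by (simp add: kappa_def divide_less_eq algebra_simps)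
qed

lemma pitchfork_coefficient_sign:
  fixes k :: real
  assumes "k > 1"
  shows "k * (2 * k - 3) / (6 * (k - 1)) < 0 \<longleftrightarrow> k < 3 / 2"
    and "k * (2 * k - 3) / (6 * (k - 1)) > 0 \<longleftrightarrow> k > 3 / 2"
  using assms by (auto simp: divide_less_0_iff zero_less_divide_iff mult_less_0_iff zero_less_mult_iff)

locale pitchfork_branch =
  fixes D \<delta> :: real and n :: nat and \<alpha> :: "real \<Rightarrow> real" and z :: "real \<Rightarrow> real \<Rightarrow> real"
  assumes D_pos: "D > 0" and n_pos: "n \<ge> 1" and \<delta>_pos: "\<delta> > 0"
    and \<alpha>_smooth: "smooth_on {-\<delta><..<\<delta>} \<alpha>"
    and \<alpha>0: "\<alpha> 0 = 0" and d\<alpha>0: "deriv \<alpha> 0 = 0"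
    and z_smooth: "smooth_on ({-\<delta><..<\<delta>} \<times> UNIV) (\<lambda>(s, x). z s x)"
    and z0: "\<forall>x. z 0 x = 0"
    and sol: "\<forall>s. \<bar>s\<bar> < \<delta> \<longrightarrow>
               stationary_solution D (kappa D n + \<alpha> s) (branch_U D n \<alpha> z s)"
begin

definition phi :: "real \<Rightarrow> real" where
  "phi x = sqrt 2 * cos (2 * real n * pi * x)"

definition psi :: "real \<Rightarrow> real" where
  "psi x = cos (2 * real (2 * n) * pi * x)"

definition lam :: "real \<Rightarrow> real" where
  "lam s = kappa D n + \<alpha> s"

definition Z :: "real \<Rightarrow> real \<Rightarrow> real" where
  "Z s x = phi x + z s x"

definition M :: "real \<Rightarrow> real" where
  "M s = integral {0..1} (\<lambda>x. exp (s * Z s x))"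

lemma branch_U_eq: "branch_U D n \<alpha> z s x = lam s + s * Z s x"
  by (simp add: branch_U_def lam_def Z_def phi_def algebra_simps)

lemma z_differentiable:
  assumes "\<bar>s\<bar> < \<delta>"
  shows "z s differentiable (at x)" and "deriv (z s) differentiable (at x)"
  using smooth_on_prod_differentiable_snd[OF z_smooth, of s x] assms by (auto simp: abs_less_iff)

lemma continuous_on_z: "\<bar>s\<bar> < \<delta> \<Longrightarrow> continuous_on A (z s)"
  by (meson z_differentiable(1) continuous_at_imp_continuous_on differentiable_imp_continuous_within)

lemma continuous_on_Z: "\<bar>s\<bar> < \<delta> \<Longrightarrow> continuous_on A (Z s)"
  unfolding Z_def[abs_def] phi_def by (intro continuous_intros continuous_on_z)

lemma continuous_on_phi: "continuous_on A phi"
  and continuous_on_psi: "continuous_on A psi"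
  unfolding phi_def[abs_def] psi_def[abs_def] by (intro continuous_intros)+

lemma abs_phi_le: "\<bar>phi x\<bar> \<le> sqrt 2"
  by (simp add: phi_def abs_mult)

lemma kappa_gt_1: "kappa D n > 1"
  using D_pos n_pos by (simp add: kappa_def)

lemma eventually_punctured_branch: "\<forall>\<^sub>F s in at 0. s \<noteq> 0 \<and> \<bar>s\<bar> < \<delta>"
  using \<delta>_pos by (auto simp: eventually_at intro!: exI[of _ \<delta>])

lemma eventually_z_small:
  obtains C where "C \<ge> 0"
    and "\<forall>\<^sub>F s in at 0. s \<noteq> 0 \<and> \<bar>s\<bar> < \<delta> \<and> \<bar>s\<bar> \<le> 1 \<and> (\<forall>x\<in>{0..1}. \<bar>z s x\<bar> \<le> C * \<bar>s\<bar>)"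
proof -
  define r where "r = \<delta> / 2"
  have "\<exists>C. \<forall>s\<in>{-r..r}. \<forall>x\<in>{0..1}. \<bar>z s x\<bar> \<le> C * \<bar>s\<bar>"
  proof (rule linear_bound_vanishing_at_0)
    show "((\<lambda>\<sigma>. z \<sigma> x) has_real_derivative iter_pd [(1, 0)] (\<lambda>(s, x). z s x) (\<sigma>, x)) (at \<sigma>)"
      if "\<sigma> \<in> {-r..r}" for \<sigma> x
      using smooth_on_prod_deriv_fst[OF z_smooth, of \<sigma> x] \<delta>_pos that by (auto simp: r_def)
    have "continuous_on ({-\<delta><..<\<delta>} \<times> UNIV) (iter_pd [(1, 0)] (\<lambda>(s, x). z s x))"
      by (rule smooth_on_partials(1)[OF z_smooth]) (simp add: Basis_prod_def)
    then show "continuous_on ({-r..r} \<times> {0..1}) (\<lambda>(\<sigma>, x). iter_pd [(1, 0)] (\<lambda>(s, x). z s x) (\<sigma>, x))"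
      unfolding case_prod_eta by (rule continuous_on_subset) (use \<delta>_pos in \<open>auto simp: r_def\<close>)
  qed (use z0 in auto)
  then obtain C where C: "\<And>s x. s \<in> {-r..r} \<Longrightarrow> x \<in> {0..1} \<Longrightarrow> \<bar>z s x\<bar> \<le> C * \<bar>s\<bar>"
    by blast
  have "\<forall>\<^sub>F s in at 0. s \<noteq> 0 \<and> \<bar>s\<bar> < \<delta> \<and> \<bar>s\<bar> \<le> 1 \<and> (\<forall>x\<in>{0..1}. \<bar>z s x\<bar> \<le> \<bar>C\<bar> * \<bar>s\<bar>)"
    unfolding eventually_at using \<delta>_pos
    by (intro exI[of _ "min 1 r"])
      (auto simp: r_def intro!: order_trans[OF C] mult_right_mono)
  then show ?thesis using that[of "\<bar>C\<bar>"] by simp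
qed

lemma M_pos: "\<bar>s\<bar> < \<delta> \<Longrightarrow> M s > 0"
  unfolding M_def by (rule integral_pos_continuous) (auto intro!: continuous_intros continuous_on_Z)

lemma branch_U_differentiable:
  assumes "\<bar>s\<bar> < \<delta>"
  shows "branch_U D n \<alpha> z s differentiable (at x)"
    and "deriv (branch_U D n \<alpha> z s) differentiable (at x)"
proof -
  define \<omega> where "\<omega> = 2 * real n * pi"
  have U: "branch_U D n \<alpha> z s = (\<lambda>x. kappa D n + \<alpha> s + s * sqrt 2 * cos (\<omega> * x) + s * z s x)"
    by (auto simp: branch_U_def \<omega>_def)
  have z': "(z s has_real_derivative deriv (z s) y) (at y)"
    and z'': "(deriv (z s) has_real_derivative deriv (deriv (z s)) y) (at y)" for y
    using z_differentiable[OF assms] by (simp_all add: DERIV_deriv_iff_real_differentiable)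
  have U': "(branch_U D n \<alpha> z s has_real_derivative
      s * sqrt 2 * (- sin (\<omega> * y) * \<omega>) + s * deriv (z s) y) (at y)" for y
    unfolding U by (auto intro!: derivative_eq_intros z')
  then show "branch_U D n \<alpha> z s differentiable (at x)"
    using real_differentiable_def by blast
  have "deriv (branch_U D n \<alpha> z s) = (\<lambda>y. s * sqrt 2 * (- sin (\<omega> * y) * \<omega>) + s * deriv (z s) y)"
    using U' by (auto intro: DERIV_imp_deriv)
  moreover have "((\<lambda>y. s * sqrt 2 * (- sin (\<omega> * y) * \<omega>) + s * deriv (z s) y) has_real_derivative
      s * sqrt 2 * (- (cos (\<omega> * x) * \<omega>) * \<omega>) + s * deriv (deriv (z s)) x) (at x)"
    by (auto intro!: derivative_eq_intros z'')
  ultimately show "deriv (branch_U D n \<alpha> z s) differentiable (at x)"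
    using real_differentiable_def by metis
qed

lemma cos_moment_balance:
  fixes m :: nat
  assumes "\<bar>s\<bar> < \<delta>"
  defines "c \<equiv> \<lambda>x. cos (2 * real m * pi * x)"
  shows "kappa D m * (lam s * integral {0..1} c + s * integral {0..1} (\<lambda>x. c x * Z s x))
       = lam s / M s * integral {0..1} (\<lambda>x. c x * exp (s * Z s x))"
proof -
  have "kappa D m * integral {0..1} (\<lambda>x. c x * branch_U D n \<alpha> z s x)
      = lam s / integral {0..1} (\<lambda>y. exp (branch_U D n \<alpha> z s y))
        * integral {0..1} (\<lambda>x. c x * exp (branch_U D n \<alpha> z s x))"
    unfolding kappa_eq c_def
    using sol assms(1) branch_U_differentiable[OF assms(1)]
    by (intro stationary_solution_cos_moment) (auto simp: lam_def)
  moreover have "(\<lambda>x. c x * branch_U D n \<alpha> z s x) = (\<lambda>x. lam s * c x + s * (c x * Z s x))"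
    by (simp add: branch_U_eq fun_eq_iff algebra_simps)
  moreover have "((\<lambda>x. lam s * c x + s * (c x * Z s x)) has_integral
      lam s * integral {0..1} c + s * integral {0..1} (\<lambda>x. c x * Z s x)) {0..1}"
    unfolding c_def
    by (intro has_integral_add has_integral_mult_right integrable_integral integrable_continuous_interval
        continuous_intros continuous_on_Z[OF assms(1)])
  moreover have "integral {0..1} (\<lambda>y. exp (branch_U D n \<alpha> z s y)) = exp (lam s) * M s"
    by (simp add: branch_U_eq exp_add M_def)
  moreover have "(\<lambda>x. c x * exp (branch_U D n \<alpha> z s x)) = (\<lambda>x. exp (lam s) * (c x * exp (s * Z s x)))"
    by (simp add: fun_eq_iff branch_U_eq exp_add mult_ac)
  ultimately show ?thesis
    by (simp add: integral_unique)
qed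

lemma has_integral_phi_powers:
  shows "(phi has_integral 0) {0..1}"
    and "((\<lambda>x. phi x ^ 2) has_integral 1) {0..1}"
    and "((\<lambda>x. phi x ^ 3) has_integral 0) {0..1}"
    and "((\<lambda>x. phi x ^ 4) has_integral 3 / 2) {0..1}"
proof -
  define c where "c x = cos (2 * real n * pi * x)" for x
  have phi_pow: "phi x ^ k = sqrt 2 ^ k * c x ^ k" for x k
    by (simp add: phi_def c_def power_mult_distrib)
  have sqrt2: "sqrt 2 ^ 2 = 2" "sqrt 2 ^ 3 = 2 * sqrt 2" "sqrt 2 ^ 4 = (4::real)"
    by (simp_all add: power_numeral_reduce)
  note c = has_integral_cos_powers[OF n_pos, folded c_def]
  show "(phi has_integral 0) {0..1}"
    using has_integral_mult_right[OF has_integral_cos_multiple[OF n_pos], of "sqrt 2"]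
    by (simp add: phi_def[abs_def])
  show "((\<lambda>x. phi x ^ 2) has_integral 1) {0..1}"
    using has_integral_mult_right[OF c(1), of "sqrt 2 ^ 2"] by (simp add: phi_pow sqrt2)
  show "((\<lambda>x. phi x ^ 3) has_integral 0) {0..1}"
    using has_integral_mult_right[OF c(2), of "sqrt 2 ^ 3"] by (simp add: phi_pow)
  show "((\<lambda>x. phi x ^ 4) has_integral 3 / 2) {0..1}"
    using has_integral_mult_right[OF c(3), of "sqrt 2 ^ 4"] by (simp add: phi_pow sqrt2)
qed

lemma psi_eq: "psi x = phi x ^ 2 - 1"
  using cos_double_cos[of "2 * real n * pi * x"]
  by (simp add: psi_def phi_def power_mult_distrib mult_ac)

lemma has_integral_psi: "(psi has_integral 0) {0..1}"
  using has_integral_cos_multiple[of "2 * n"] n_pos by (simp add: psi_def[abs_def])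

lemma integral_Z:
  assumes "\<bar>s\<bar> < \<delta>" "s \<noteq> 0"
  shows "integral {0..1} (Z s) = 0"
proof -
  have "lam s + s * integral {0..1} (Z s) = lam s / M s * M s"
    using cos_moment_balance[OF assms(1), of 0] by (simp add: kappa_def M_def)
  then show ?thesis
    using M_pos[OF assms(1)] assms(2) by simp
qed

lemma phi_balance:
  assumes "\<bar>s\<bar> < \<delta>"
  shows "kappa D n * s * integral {0..1} (\<lambda>x. phi x * Z s x)
       = lam s / M s * integral {0..1} (\<lambda>x. phi x * exp (s * Z s x))"
proof -
  define c where "c x = cos (2 * real n * pi * x)" for x
  have "integral {0..1} c = 0"
    using has_integral_cos_multiple[OF n_pos] by (simp add: c_def[abs_def] integral_unique)
  then have "kappa D n * (s * integral {0..1} (\<lambda>x. c x * Z s x))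
      = lam s / M s * integral {0..1} (\<lambda>x. c x * exp (s * Z s x))"
    using cos_moment_balance[OF assms, of n] by (simp add: c_def[abs_def])
  moreover have phi_c: "integral {0..1} (\<lambda>x. phi x * f x) = sqrt 2 * integral {0..1} (\<lambda>x. c x * f x)" for f
    by (simp add: phi_def c_def mult.assoc)
  ultimately show ?thesis
    unfolding phi_c by (simp add: field_simps)
qed

lemma psi_balance:
  assumes "\<bar>s\<bar> < \<delta>"
  shows "kappa D (2 * n) * s * integral {0..1} (\<lambda>x. psi x * Z s x)
       = lam s / M s * integral {0..1} (\<lambda>x. psi x * exp (s * Z s x))"
  using cos_moment_balance[OF assms, of "2 * n"] integral_unique[OF has_integral_psi]
  by (simp add: psi_def[abs_def] mult.assoc)

definition A :: "real \<Rightarrow> real" where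
  "A s = integral {0..1} (\<lambda>x. phi x * Z s x)"

definition J :: "real \<Rightarrow> real" where
  "J s = integral {0..1} (\<lambda>x. psi x * z s x)"

definition W :: "real \<Rightarrow> real" where
  "W s = integral {0..1} (\<lambda>x. phi x * z s x ^ 2 / s)"

definition taylor_moment :: "(real \<Rightarrow> real) \<Rightarrow> nat \<Rightarrow> real \<Rightarrow> real" where
  "taylor_moment g k s = integral {0..1} (\<lambda>x. g x * exp_taylor_quot k s (Z s x))"

lemma A_eq:
  assumes "\<bar>s\<bar> < \<delta>"
  shows "A s = 1 + integral {0..1} (\<lambda>x. phi x * z s x)"
proof -
  have "((\<lambda>x. phi x ^ 2 + phi x * z s x) has_integral 1 + integral {0..1} (\<lambda>x. phi x * z s x)) {0..1}"
    by (intro has_integral_add has_integral_phi_powers has_integral_continuous continuous_intros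
        continuous_on_phi continuous_on_z[OF assms])
  then show ?thesis
    unfolding A_def Z_def by (simp add: power2_eq_square distrib_left integral_unique)
qed

lemma integral_psi_Z:
  assumes "\<bar>s\<bar> < \<delta>"
  shows "integral {0..1} (\<lambda>x. psi x * Z s x) = J s"
proof -
  have "((\<lambda>x. (phi x ^ 3 - phi x) + psi x * z s x) has_integral (0 - 0) + J s) {0..1}"
    unfolding J_def
    by (intro has_integral_add has_integral_diff has_integral_phi_powers has_integral_continuous
        continuous_intros continuous_on_psi continuous_on_z[OF assms])
  moreover have "(phi x ^ 3 - phi x) + psi x * z s x = psi x * Z s x" for x
    by (simp add: psi_eq Z_def algebra_simps power3_eq_cube power2_eq_square)
  ultimately show ?thesis
    by (simp add: integral_unique)
qed

lemma integral_phi_Z_sq: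
  assumes "\<bar>s\<bar> < \<delta>" "s \<noteq> 0"
  shows "integral {0..1} (\<lambda>x. phi x * Z s x ^ 2) = 2 * J s + s * W s"
proof -
  have "((\<lambda>x. Z s x - phi x) has_integral 0 - 0) {0..1}"
    using has_integral_continuous[OF continuous_on_Z[OF assms(1)], of 0 1]
    by (intro has_integral_diff has_integral_phi_powers) (simp add: integral_Z[OF assms])
  then have z: "(z s has_integral 0) {0..1}"
    by (simp add: Z_def)
  have "((\<lambda>x. phi x ^ 3 + 2 * z s x + 2 * (psi x * z s x) + s * (phi x * z s x ^ 2 / s))
      has_integral 0 + 2 * 0 + 2 * J s + s * W s) {0..1}"
    unfolding J_def W_def
    by (intro has_integral_add has_integral_mult_right has_integral_phi_powers z has_integral_continuous
        continuous_intros continuous_on_phi continuous_on_psi continuous_on_z[OF assms(1)])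
      (use assms(2) in simp)
  moreover have "phi x ^ 3 + 2 * z s x + 2 * (psi x * z s x) + s * (phi x * z s x ^ 2 / s) = phi x * Z s x ^ 2" for x
    using assms(2) by (simp add: psi_eq Z_def algebra_simps power3_eq_cube power2_eq_square)
  ultimately show ?thesis
    by (simp add: integral_unique)
qed

lemma M_expansion:
  assumes "\<bar>s\<bar> < \<delta>" "s \<noteq> 0"
  shows "M s = 1 + s\<^sup>2 * taylor_moment (\<lambda>_. 1) 2 s"
  using integral_exp_taylor[of 0 1 "\<lambda>_. 1" "Z s" s 2] continuous_on_Z[OF assms(1)] assms(2)
  by (simp add: M_def taylor_moment_def integral_Z[OF assms] lessThan_nat_numeral)

lemma psi_exp_expansion:
  assumes "\<bar>s\<bar> < \<delta>" "s \<noteq> 0"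
  shows "integral {0..1} (\<lambda>x. psi x * exp (s * Z s x)) = s * J s + s\<^sup>2 * taylor_moment psi 2 s"
  using integral_exp_taylor[of 0 1 psi "Z s" s 2] continuous_on_Z[OF assms(1)] continuous_on_psi assms(2)
  by (simp add: taylor_moment_def integral_psi_Z[OF assms(1)] integral_unique[OF has_integral_psi]
      lessThan_nat_numeral)

lemma phi_exp_expansion:
  assumes "\<bar>s\<bar> < \<delta>" "s \<noteq> 0"
  shows "integral {0..1} (\<lambda>x. phi x * exp (s * Z s x))
       = s * A s + s\<^sup>2 * J s + s ^ 3 / 2 * W s + s ^ 3 * taylor_moment phi 3 s"
  using integral_exp_taylor[of 0 1 phi "Z s" s 3] continuous_on_Z[OF assms(1)] continuous_on_phi assms(2)
    power3_eq_cube[of s] power2_eq_square[of s]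
  by (simp add: taylor_moment_def A_def integral_phi_Z_sq[OF assms] integral_unique[OF has_integral_phi_powers(1)]
      lessThan_nat_numeral algebra_simps)

lemma Z_tendsto:
  assumes "x \<in> {0..1}"
  shows "((\<lambda>s. Z s x) \<longlongrightarrow> phi x) (at 0)"
proof -
  obtain C where C: "\<forall>\<^sub>F s in at 0. s \<noteq> 0 \<and> \<bar>s\<bar> < \<delta> \<and> \<bar>s\<bar> \<le> 1 \<and> (\<forall>x\<in>{0..1}. \<bar>z s x\<bar> \<le> C * \<bar>s\<bar>)"
    using eventually_z_small by blast
  have "((\<lambda>s. z s x) \<longlongrightarrow> 0) (at 0)"
  proof (rule Lim_null_comparison)
    show "\<forall>\<^sub>F s in at 0. norm (z s x) \<le> C * \<bar>s\<bar>"
      using C by eventually_elim (use assms in auto)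
    show "((\<lambda>s. C * \<bar>s\<bar>) \<longlongrightarrow> 0) (at 0)"
      by (auto intro!: tendsto_eq_intros)
  qed
  then show ?thesis
    unfolding Z_def using tendsto_add[OF tendsto_const] by fastforce
qed

lemma eventually_Z_bounded:
  obtains B where "\<forall>\<^sub>F s in at 0. s \<noteq> 0 \<and> \<bar>s\<bar> < \<delta> \<and> \<bar>s\<bar> \<le> 1 \<and> (\<forall>x\<in>{0..1}. \<bar>Z s x\<bar> \<le> B)"
proof -
  obtain C where "C \<ge> 0"
    and C: "\<forall>\<^sub>F s in at 0. s \<noteq> 0 \<and> \<bar>s\<bar> < \<delta> \<and> \<bar>s\<bar> \<le> 1 \<and> (\<forall>x\<in>{0..1}. \<bar>z s x\<bar> \<le> C * \<bar>s\<bar>)"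
    using eventually_z_small by blast
  have "\<forall>\<^sub>F s in at 0. s \<noteq> 0 \<and> \<bar>s\<bar> < \<delta> \<and> \<bar>s\<bar> \<le> 1 \<and> (\<forall>x\<in>{0..1}. \<bar>Z s x\<bar> \<le> sqrt 2 + C)"
    using C
  proof eventually_elim
    case (elim s)
    have "\<bar>Z s x\<bar> \<le> sqrt 2 + C" if "x \<in> {0..1}" for x
    proof -
      have "\<bar>z s x\<bar> \<le> C"
        using elim that \<open>C \<ge> 0\<close> by (meson mult_left_le order_trans abs_ge_zero)
      then show ?thesis
        using abs_phi_le[of x] abs_triangle_ineq[of "phi x" "z s x"] by (simp add: Z_def)
    qed
    then show ?case using elim by blast
  qed
  then show ?thesis using that by blast
qed

lemma tendsto_taylor_moment:
  assumes g: "continuous_on {0..1} g"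
  shows "(taylor_moment g k \<longlongrightarrow> integral {0..1} (\<lambda>x. g x * (phi x ^ k / fact k))) (at 0)"
proof -
  obtain B where Z_bound: "\<forall>\<^sub>F s in at 0. s \<noteq> 0 \<and> \<bar>s\<bar> < \<delta> \<and> \<bar>s\<bar> \<le> 1 \<and> (\<forall>x\<in>{0..1}. \<bar>Z s x\<bar> \<le> B)"
    using eventually_Z_bounded by blast
  obtain G where G: "\<And>x. x \<in> {0..1} \<Longrightarrow> \<bar>g x\<bar> \<le> G"
    using compact_imp_bounded[OF compact_continuous_image[OF g compact_Icc]]
    by (fastforce simp: bounded_iff)
  define Q where "Q = exp (1 * B) * B ^ k / fact k"
  show ?thesis
    unfolding taylor_moment_def
  proof (rule integral_tendsto_dominated_at[where h = "\<lambda>_. G * Q"])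
    show "\<forall>\<^sub>F s in at 0. (\<lambda>x. g x * exp_taylor_quot k s (Z s x)) integrable_on {0..1}
        \<and> (\<forall>x\<in>{0..1}. norm (g x * exp_taylor_quot k s (Z s x)) \<le> G * Q)"
      using Z_bound
    proof eventually_elim
      case (elim s)
      have "(\<lambda>x. g x * exp_taylor_quot k s (Z s x)) integrable_on {0..1}"
        using elim by (intro integrable_continuous_real continuous_intros g continuous_on_exp_taylor_quot
            continuous_on_Z) auto
      moreover have "\<bar>g x * exp_taylor_quot k s (Z s x)\<bar> \<le> G * Q" if "x \<in> {0..1}" for x
        unfolding abs_mult Q_def using elim that G[OF that]
        by (intro mult_mono exp_taylor_quot_bound) auto
      ultimately show ?case by simp
    qed
    show "(\<lambda>_::real. G * Q) integrable_on {0..1}"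
      by (rule integrable_const_ivl)
    show "((\<lambda>s. g x * exp_taylor_quot k s (Z s x)) \<longlongrightarrow> g x * (phi x ^ k / fact k)) (at 0)"
      if "x \<in> {0..1}" for x
      using Z_bound that
      by (intro tendsto_mult tendsto_const tendsto_exp_taylor_quot[where B = B] Z_tendsto)
        (auto elim: eventually_mono)
  qed
qed

lemma taylor_moment_limits:
  shows "(taylor_moment (\<lambda>_. 1) 2 \<longlongrightarrow> 1 / 2) (at 0)"
    and "(taylor_moment psi 2 \<longlongrightarrow> 1 / 4) (at 0)"
    and "(taylor_moment phi 3 \<longlongrightarrow> 1 / 4) (at 0)"
proof -
  show "(taylor_moment (\<lambda>_. 1) 2 \<longlongrightarrow> 1 / 2) (at 0)"
    using tendsto_taylor_moment[of "\<lambda>_. 1" 2] integral_unique[OF has_integral_phi_powers(2)] by simp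
  have "(\<lambda>x. psi x * (phi x ^ 2 / fact 2)) = (\<lambda>x. (phi x ^ 4 - phi x ^ 2) / 2)"
    by (simp add: fun_eq_iff psi_eq power4_eq_xxxx power2_eq_square algebra_simps)
  then have "((\<lambda>x. psi x * (phi x ^ 2 / fact 2)) has_integral (3 / 2 - 1) / 2) {0..1}"
    by (simp only:) (intro has_integral_divide has_integral_diff has_integral_phi_powers)
  then have "integral {0..1} (\<lambda>x. psi x * (phi x ^ 2 / fact 2)) = (3 / 2 - 1) / 2"
    by (rule integral_unique)
  from tendsto_taylor_moment[OF continuous_on_psi, of 2, unfolded this]
  show "(taylor_moment psi 2 \<longlongrightarrow> 1 / 4) (at 0)"
    by simp
  have "(\<lambda>x. phi x * (phi x ^ 3 / fact 3)) = (\<lambda>x. phi x ^ 4 / 6)"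
    by (simp add: fun_eq_iff power4_eq_xxxx power3_eq_cube fact_numeral)
  then have "((\<lambda>x. phi x * (phi x ^ 3 / fact 3)) has_integral (3 / 2) / 6) {0..1}"
    by (simp only:) (intro has_integral_divide has_integral_phi_powers)
  then have "integral {0..1} (\<lambda>x. phi x * (phi x ^ 3 / fact 3)) = (3 / 2) / 6"
    by (rule integral_unique)
  from tendsto_taylor_moment[OF continuous_on_phi, of 3, unfolded this]
  show "(taylor_moment phi 3 \<longlongrightarrow> 1 / 4) (at 0)"
    by simp
qed

lemma integral_times_z_tendsto_0:
  assumes g: "continuous_on {0..1} g" and G: "\<And>x. x \<in> {0..1} \<Longrightarrow> \<bar>g x\<bar> \<le> G"
  shows "((\<lambda>s. integral {0..1} (\<lambda>x. g x * z s x)) \<longlongrightarrow> 0) (at 0)"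
proof -
  obtain C where "C \<ge> 0"
    and C: "\<forall>\<^sub>F s in at 0. s \<noteq> 0 \<and> \<bar>s\<bar> < \<delta> \<and> \<bar>s\<bar> \<le> 1 \<and> (\<forall>x\<in>{0..1}. \<bar>z s x\<bar> \<le> C * \<bar>s\<bar>)"
    using eventually_z_small by blast
  show ?thesis
  proof (rule integral_tendsto_0_uniform[where e = "\<lambda>s. G * (C * \<bar>s\<bar>)"])
    show "\<forall>\<^sub>F s in at 0. continuous_on {0..1} (\<lambda>x. g x * z s x)
        \<and> (\<forall>x\<in>{0..1}. \<bar>g x * z s x\<bar> \<le> G * (C * \<bar>s\<bar>))"
      using C
    proof eventually_elim
      case (elim s)
      have "\<bar>g x * z s x\<bar> \<le> G * (C * \<bar>s\<bar>)" if "x \<in> {0..1}" for x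
        unfolding abs_mult using elim that G[OF that] by (intro mult_mono) auto
      then show ?case
        using elim by (auto intro!: continuous_intros g continuous_on_z)
    qed
    show "((\<lambda>s. G * (C * \<bar>s\<bar>)) \<longlongrightarrow> 0) (at 0)"
      by (auto intro!: tendsto_eq_intros)
  qed simp
qed

lemma A_tendsto: "(A \<longlongrightarrow> 1) (at 0)"
proof -
  have "((\<lambda>s. 1 + integral {0..1} (\<lambda>x. phi x * z s x)) \<longlongrightarrow> 1 + 0) (at 0)"
    by (intro tendsto_add tendsto_const integral_times_z_tendsto_0[OF continuous_on_phi abs_phi_le])
  moreover have "\<forall>\<^sub>F s in at 0. 1 + integral {0..1} (\<lambda>x. phi x * z s x) = A s"
    using eventually_punctured_branch by eventually_elim (simp add: A_eq)
  ultimately show ?thesis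
    by (simp add: Lim_transform_eventually)
qed

lemma J_tendsto: "(J \<longlongrightarrow> 0) (at 0)"
  unfolding J_def by (rule integral_times_z_tendsto_0[OF continuous_on_psi, of 1]) (simp add: psi_def)

lemma W_tendsto: "(W \<longlongrightarrow> 0) (at 0)"
proof -
  obtain C where "C \<ge> 0"
    and C: "\<forall>\<^sub>F s in at 0. s \<noteq> 0 \<and> \<bar>s\<bar> < \<delta> \<and> \<bar>s\<bar> \<le> 1 \<and> (\<forall>x\<in>{0..1}. \<bar>z s x\<bar> \<le> C * \<bar>s\<bar>)"
    using eventually_z_small by blast
  show ?thesis
    unfolding W_def
  proof (rule integral_tendsto_0_uniform[where e = "\<lambda>s. sqrt 2 * C\<^sup>2 * \<bar>s\<bar>"])
    show "\<forall>\<^sub>F s in at 0. continuous_on {0..1} (\<lambda>x. phi x * z s x ^ 2 / s)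
        \<and> (\<forall>x\<in>{0..1}. \<bar>phi x * z s x ^ 2 / s\<bar> \<le> sqrt 2 * C\<^sup>2 * \<bar>s\<bar>)"
      using C
    proof eventually_elim
      case (elim s)
      have "\<bar>phi x * z s x ^ 2 / s\<bar> \<le> sqrt 2 * C\<^sup>2 * \<bar>s\<bar>" if "x \<in> {0..1}" for x
      proof -
        have "z s x ^ 2 \<le> (C * \<bar>s\<bar>) ^ 2"
          using elim that by (metis abs_ge_zero power2_abs power_mono)
        then have "\<bar>phi x\<bar> * z s x ^ 2 \<le> sqrt 2 * (C * \<bar>s\<bar>) ^ 2"
          by (intro mult_mono abs_phi_le) auto
        then show ?thesis
          using elim by (simp add: abs_mult abs_divide divide_le_eq power2_eq_square mult_ac)
      qed
      then show ?case
        using elim by (auto intro!: continuous_intros continuous_on_phi continuous_on_z)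
    qed
    show "((\<lambda>s. sqrt 2 * C\<^sup>2 * \<bar>s\<bar>) \<longlongrightarrow> 0) (at 0)"
      by (auto intro!: tendsto_eq_intros)
  qed simp
qed

lemma lam_tendsto: "(lam \<longlongrightarrow> kappa D n) (at 0)"
proof -
  have "isCont \<alpha> 0"
    using smooth_on_real_differentiable(1)[OF \<alpha>_smooth] \<delta>_pos
    by (simp add: differentiable_imp_continuous_within)
  then show ?thesis
    unfolding lam_def using \<alpha>0 tendsto_add[OF tendsto_const, of \<alpha> 0 "at 0" "kappa D n"]
    by (simp add: isCont_def)
qed

lemma M_tendsto: "(M \<longlongrightarrow> 1) (at 0)"
proof -
  have "((\<lambda>s. 1 + s\<^sup>2 * taylor_moment (\<lambda>_. 1) 2 s) \<longlongrightarrow> 1 + 0\<^sup>2 * (1 / 2)) (at 0)"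
    by (intro tendsto_intros taylor_moment_limits)
  moreover have "\<forall>\<^sub>F s in at 0. 1 + s\<^sup>2 * taylor_moment (\<lambda>_. 1) 2 s = M s"
    using eventually_punctured_branch by eventually_elim (simp add: M_expansion)
  ultimately show ?thesis
    by (simp add: Lim_transform_eventually)
qed

lemma J_div_tendsto:
  "((\<lambda>s. J s / s) \<longlongrightarrow> kappa D n / 4 / (kappa D (2 * n) - kappa D n)) (at 0)"
proof -
  define K where "K = kappa D (2 * n)"
  have gap: "K - kappa D n > 0"
    using kappa_double_gap kappa_gt_1 by (simp add: K_def)
  have den: "((\<lambda>s. K * M s - lam s) \<longlongrightarrow> K * 1 - kappa D n) (at 0)"
    by (intro tendsto_intros M_tendsto lam_tendsto)
  have "((\<lambda>s. lam s * taylor_moment psi 2 s / (K * M s - lam s)) \<longlongrightarrow> kappa D n * (1 / 4) / (K * 1 - kappa D n)) (at 0)"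
    using gap by (intro tendsto_intros lam_tendsto taylor_moment_limits den) auto
  moreover have "\<forall>\<^sub>F s in at 0. K * M s - lam s \<noteq> 0"
    by (rule tendsto_imp_eventually_ne[OF den]) (use gap in simp)
  then have "\<forall>\<^sub>F s in at 0. lam s * taylor_moment psi 2 s / (K * M s - lam s) = J s / s"
    using eventually_punctured_branch
  proof eventually_elim
    case (elim s)
    then have "K * s * J s = lam s / M s * (s * J s + s\<^sup>2 * taylor_moment psi 2 s)"
      using psi_balance[of s] integral_psi_Z[of s] psi_exp_expansion[of s] by (simp add: K_def)
    then have "s * (J s * (K * M s - lam s)) = s * (lam s * (s * taylor_moment psi 2 s))"
      using M_pos[of s] elim by (simp add: field_simps power2_eq_square)
    then have "J s * (K * M s - lam s) = lam s * (s * taylor_moment psi 2 s)"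
      using elim by simp
    then show ?case
      using elim by (simp add: field_simps)
  qed
  ultimately show ?thesis
    by (simp add: K_def Lim_transform_eventually)
qed

lemma alpha_div_sq_tendsto:
  "((\<lambda>s. \<alpha> s / s\<^sup>2) \<longlongrightarrow> kappa D n * (1 / 4 - kappa D n / 4 / (kappa D (2 * n) - kappa D n))) (at 0)"
proof -
  define \<kappa> where "\<kappa> = kappa D n"
  define L where "L = \<kappa> / 4 / (kappa D (2 * n) - \<kappa>)"
  define den where "den s = A s + s * J s + s\<^sup>2 / 2 * W s + s\<^sup>2 * taylor_moment phi 3 s" for s
  define num where "num s = A s * taylor_moment (\<lambda>_. 1) 2 s - J s / s - W s / 2 - taylor_moment phi 3 s" for s
  have den_lim: "(den \<longlongrightarrow> 1) (at 0)"
    unfolding den_def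
    by (auto intro!: tendsto_eq_intros A_tendsto J_tendsto W_tendsto taylor_moment_limits)
  have num_lim: "(num \<longlongrightarrow> 1 * (1 / 2) - L - 0 / 2 - 1 / 4) (at 0)"
    unfolding num_def L_def \<kappa>_def
    by (intro tendsto_diff tendsto_mult J_div_tendsto tendsto_divide A_tendsto W_tendsto
        taylor_moment_limits tendsto_const) simp
  have "((\<lambda>s. \<kappa> * num s / den s) \<longlongrightarrow> \<kappa> * (1 / 2 - L - 1 / 4) / 1) (at 0)"
    using num_lim by (intro tendsto_intros den_lim) simp_all
  moreover have "\<forall>\<^sub>F s in at 0. den s \<noteq> 0"
    by (rule tendsto_imp_eventually_ne[OF den_lim]) simp
  then have "\<forall>\<^sub>F s in at 0. \<kappa> * num s / den s = \<alpha> s / s\<^sup>2"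
    using eventually_punctured_branch
  proof eventually_elim
    case (elim s)
    \<comment> \<open>Divided by s, the phi-balance reads \<kappa> * A s * M s = lam s * den s; substituting
      M_expansion and lam s = \<kappa> + \<alpha> s isolates \<alpha> s.\<close>
    have "\<kappa> * s * A s = lam s / M s * (s * den s)"
      using phi_balance[of s] phi_exp_expansion[of s] elim
      by (simp add: \<kappa>_def A_def den_def algebra_simps power2_eq_square power3_eq_cube)
    then have "s * (\<kappa> * A s * M s) = s * ((\<kappa> + \<alpha> s) * den s)"
      using M_pos[of s] elim by (simp add: lam_def \<kappa>_def field_simps)
    then have "\<kappa> * A s * M s = (\<kappa> + \<alpha> s) * den s"
      using elim by simp
    then have "\<alpha> s * den s = s\<^sup>2 * (\<kappa> * num s)"
      using M_expansion[of s] elim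
      by (simp add: num_def den_def field_simps power2_eq_square)
    then show ?case
      using elim by (simp add: field_simps)
  qed
  ultimately show ?thesis
    by (simp add: L_def \<kappa>_def Lim_transform_eventually)
qed

lemma alpha_div_sq_tendsto_second_deriv:
  "((\<lambda>s. \<alpha> s / s\<^sup>2) \<longlongrightarrow> deriv (deriv \<alpha>) 0 / 2) (at 0)"
proof (rule tendsto_div_square_second_deriv[OF \<alpha>0 d\<alpha>0])
  have "\<forall>\<^sub>F s in nhds 0. s \<in> {-\<delta><..<\<delta>}"
    using \<delta>_pos by (intro eventually_nhds_in_open) auto
  then show "\<forall>\<^sub>F s in nhds 0. (\<alpha> has_real_derivative deriv \<alpha> s) (at s)"
    by eventually_elim
      (simp add: smooth_on_real_differentiable(1)[OF \<alpha>_smooth] DERIV_deriv_iff_real_differentiable)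
  show "(deriv \<alpha> has_real_derivative deriv (deriv \<alpha>) 0) (at 0)"
    using smooth_on_real_differentiable(2)[OF \<alpha>_smooth] \<delta>_pos
    by (simp add: DERIV_deriv_iff_real_differentiable)
qed

lemma second_deriv_alpha:
  "deriv (deriv \<alpha>) 0 = kappa D n * (2 * kappa D n - 3) / (6 * (kappa D n - 1))"
proof -
  have "deriv (deriv \<alpha>) 0 / 2 = kappa D n * (1 / 4 - kappa D n / 4 / (3 * (kappa D n - 1)))"
    using tendsto_unique[OF _ alpha_div_sq_tendsto_second_deriv alpha_div_sq_tendsto]
    unfolding kappa_double_gap by simp
  then show ?thesis
    using kappa_gt_1 by (simp add: field_simps)
qed

end

theorem mainTheorem14:
  fixes D \<delta> :: real and n :: nat
    and \<alpha> :: "real \<Rightarrow> real" and z :: "real \<Rightarrow> real \<Rightarrow> real"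
  assumes D_pos: "D > 0" and n_pos: "n \<ge> 1" and \<delta>_pos: "\<delta> > 0"
    and kappa_ne: "kappa D n \<noteq> 3 / 2"
    and \<alpha>_smooth: "smooth_on {-\<delta><..<\<delta>} \<alpha>"
    and \<alpha>0: "\<alpha> 0 = 0" and d\<alpha>0: "deriv \<alpha> 0 = 0"
    and z_smooth: "smooth_on ({-\<delta><..<\<delta>} \<times> UNIV) (\<lambda>(s, x). z s x)"
    and z0: "\<forall>x. z 0 x = 0"
    and sol: "\<forall>s. \<bar>s\<bar> < \<delta> \<longrightarrow>
               stationary_solution D (kappa D n + \<alpha> s) (branch_U D n \<alpha> z s)"
  shows "deriv (deriv \<alpha>) 0 \<noteq> 0
         \<and> (kappa D n < 3 / 2 \<longrightarrow> deriv (deriv \<alpha>) 0 < 0 \<and> subcritical D n \<alpha>)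
         \<and> (kappa D n > 3 / 2 \<longrightarrow> deriv (deriv \<alpha>) 0 > 0 \<and> supercritical D n \<alpha>)
         \<and> (deriv (deriv \<alpha>) 0 < 0 \<longleftrightarrow> kappa D n < 3 / 2)
         \<and> (deriv (deriv \<alpha>) 0 > 0 \<longleftrightarrow> kappa D n > 3 / 2)
         \<and> (kappa D n < 3 / 2 \<longleftrightarrow> D < 1 / (8 * (real n)\<^sup>2 * pi\<^sup>2))
         \<and> (kappa D n > 3 / 2 \<longleftrightarrow> D > 1 / (8 * (real n)\<^sup>2 * pi\<^sup>2))"
proof -
  interpret pitchfork_branch D \<delta> n \<alpha> z
    using assms by unfold_locales
  have neg: "deriv (deriv \<alpha>) 0 < 0 \<longleftrightarrow> kappa D n < 3 / 2"
    and pos: "deriv (deriv \<alpha>) 0 > 0 \<longleftrightarrow> kappa D n > 3 / 2"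
    unfolding second_deriv_alpha using pitchfork_coefficient_sign[OF kappa_gt_1] by blast+
  have "subcritical D n \<alpha>" if "deriv (deriv \<alpha>) 0 < 0"
    using sign_near_0_from_div_square(1)[OF alpha_div_sq_tendsto_second_deriv] that
    by (simp add: subcritical_def)
  moreover have "supercritical D n \<alpha>" if "deriv (deriv \<alpha>) 0 > 0"
    using sign_near_0_from_div_square(2)[OF alpha_div_sq_tendsto_second_deriv] that
    by (simp add: supercritical_def)
  moreover have "deriv (deriv \<alpha>) 0 \<noteq> 0"
    using neg pos kappa_ne by (auto simp: linorder_neq_iff)
  ultimately show ?thesis
    using neg pos kappa_vs_three_halves[OF n_pos, of D] by blast
qed

end
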